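(* Fix a transcript whose feasible region $\Phi_T$ is nonempty and bounded. For every function $\hat G:S^{d-1}\to\mathbb{R}$, \[ \sup_{x\in\Phi_T}\ \sup_{v\in S^{d-1}}\bigl|\hat G(v)-\langle x,v\rangle\bigr|\;\ge\;\tfrac12\,\mathrm{diam}(\Phi_T), \] with equality for the rule $\hat G(v)=\tfrac12\bigl(\sup_{x\in\Phi_T}\langle x,v\rangle+\inf_{x\in\Phi_T}\langle x,v\rangle\bigr)$. Consequently $\mathrm{OPT}^{\mathrm{improper}}_d(T,\delta)=\inf_{\mathcal R}\sup\tfrac12\mathrm{diam}(\Phi_T)$, the supremum being over all transcripts produced by $\mathcal R$ with answers chosen online arbitrarily subject to $\Phi_T\neq\emptyset$.
   Context: Improper linear reconstruction game: fix $d\ge1$, $T\ge0$, $\delta>0$. An adversary holds a secret $x^*\in\mathbb{R}^d$; in each round $t=1,\dots,T$ the reconstructor (possibly adaptively) chooses $v_t\in S^{d-1}$ and receives $r_t\in\mathbb{R}$ with $|r_t-\langle x^*,v_t\rangle|\le\delta$. After $T$ rounds the reconstructor outputs a function $\hat G_T:S^{d-1}\to\mathbb{R}$. All strategies are deterministic. $\mathrm{OPT}^{\mathrm{improper}}_d(T,\delta)=\inf_{\mathcal R}\sup_{x^*}\sup_{\mathcal A}\sup_{v\in S^{d-1}}|\hat G_T(v)-\langle x^*,v\rangle|$, the infimum over improper reconstructor strategies and the suprema over secrets and adversary answer strategies consistent with the secret. The feasible region is $\Phi_T=\{x\in\mathbb{R}^d: |\langle x,v_t\rangle-r_t|\le\delta\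 \forall t\in[T]\}$; $\mathrm{diam}(A)=\sup_{x,y\in A}\|x-y\|_2$. *)

theory Defs
  imports "HOL-Analysis.Analysis"
begin

definition Phi :: "nat \<Rightarrow> real \<Rightarrow> (nat \<Rightarrow> 'a::euclidean_space) \<Rightarrow> (nat \<Rightarrow> real) \<Rightarrow> 'a set" where
  "Phi T \<delta> vs rs = {x. \<forall>t<T. \<bar>x \<bullet> vs t - rs t\<bar> \<le> \<delta>}"

definition worst_err :: "'a::euclidean_space set \<Rightarrow> ('a \<Rightarrow> real) \<Rightarrow> ereal" where
  "worst_err S G = (SUP x\<in>S. SUP v\<in>sphere 0 1. ereal \<bar>G v - x \<bullet> v\<bar>)"

definition ediam :: "'a::metric_space set \<Rightarrow> ereal" where
  "ediam S = (SUP x\<in>S. SUP y\<in>S. ereal (dist x y))"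

definition mid_rule :: "'a::euclidean_space set \<Rightarrow> 'a \<Rightarrow> real" where
  "mid_rule S v = (Sup ((\<lambda>x. x \<bullet> v) ` S) + Inf ((\<lambda>x. x \<bullet> v) ` S)) / 2"

text \<open>A deterministic (adaptive) reconstructor is a pair (q, out): q maps the list of answers
  received so far to the next query (on the unit sphere), out maps the full answer list to the
  output function. Because the reconstructor is deterministic, the whole transcript is determined
  by the answer list rs: the query in round t (0-based) is q (take t rs).\<close>
definition valid_recon :: "((real list \<Rightarrow> 'a::euclidean_space) \<times> (real list \<Rightarrow> 'a \<Rightarrow> real)) \<Rightarrow> bool" where
  "valid_recon R = (\<forall>rs. fst R rs \<in> sphere 0 1)"

definition queries :: "(real list \<Rightarrow> 'a) \<Rightarrow> real list \<Rightarrow> nat \<Rightarrow> 'a" where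
  "queries q rs = (\<lambda>t. q (take t rs))"

definition answers :: "real list \<Rightarrow> nat \<Rightarrow> real" where
  "answers rs = (\<lambda>t. rs ! t)"

text \<open>OPT improper: inf over reconstructors, sup over secrets x and adversary answer
  sequences consistent with x (any adaptive deterministic adversary against a deterministic
  reconstructor produces exactly such a sequence), sup over directions v.\<close>
definition OPT_improper :: "'a::euclidean_space itself \<Rightarrow> nat \<Rightarrow> real \<Rightarrow> ereal" where
  "OPT_improper _ T \<delta> =
     (INF R\<in>{R::(real list \<Rightarrow> 'a) \<times> (real list \<Rightarrow> 'a \<Rightarrow> real). valid_recon R}.
        SUP x\<in>(UNIV::'a set).
          SUP rs\<in>{rs. length rs = T \<and> x \<in> Phi T \<delta> (queries (fst R) rs) (answers rs)}.
            SUP v\<in>sphere (0::'a) 1. ereal \<bar>snd R rs v - x \<bullet> v\<bar>)"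

end

theory Submission
  imports Defs
begin

text \<open>Two feasible points x, y cannot be told apart by the transcript, and in the direction
  v = (x - y) / |x - y| their linear forms differ by |x - y|; so any estimate errs by at least
  |x - y| / 2 at one of them. The midpoint rule errs in each direction by at most half the width
  of the region in that direction, which is at most the diameter. For the game value: a
  deterministic reconstructor and the answer list determine the transcript, so the supremum over
  secrets and consistent answers is a supremum over nonempty feasible regions; and replacing the
  output of any reconstructor by the midpoint rule of its region is again a reconstructor.\<close>

lemma closed_Phi: "closed (Phi T \<delta> vs rs)"
proof -
  have "Phi T \<delta> vs rs = (\<Inter>t<T. {x. \<bar>x \<bullet> vs t - rs t\<bar> \<le> \<delta>})"
    unfolding Phi_def by auto
  moreover have "closed {x::'a. \<bar>x \<bullet> vs t - rs t\<bar> \<le> \<delta>}" for t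
    by (intro closed_Collect_le continuous_intros)
  ultimately show ?thesis by auto
qed

lemma ediam_eq_diameter:
  fixes S :: "'a::metric_space set"
  assumes "compact S" "S \<noteq> {}"
  shows "ediam S = ereal (diameter S)"
proof (rule antisym)
  show "ediam S \<le> ereal (diameter S)"
    unfolding ediam_def
    using diameter_bounded_bound[OF compact_imp_bounded[OF assms(1)]] by (simp add: SUP_least)
  obtain x y where "x \<in> S" "y \<in> S" "dist x y = diameter S"
    using diameter_compact_attained[OF assms] by blast
  then show "ereal (diameter S) \<le> ediam S"
    unfolding ediam_def by (metis SUP_upper2 SUP_upper)
qed

lemma ediam_unbounded:
  fixes S :: "'a::metric_space set"
  assumes "\<not> bounded S"
  shows "ediam S = \<infinity>"
proof (rule ereal_top)
  fix B
  obtain x where x: "x \<in> S" using assms by fastforce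
  obtain y where y: "y \<in> S" "B < dist x y"
    using assms unfolding bounded_def by (meson not_le)
  have "ereal B \<le> ereal (dist x y)" using y by simp
  also have "\<dots> \<le> ediam S" unfolding ediam_def
    by (rule SUP_upper2[OF x], rule SUP_upper[OF y(1)])
  finally show "ereal B \<le> ediam S" .
qed

lemma error_le_worst_err:
  assumes "x \<in> S" "v \<in> sphere 0 1"
  shows "ereal \<bar>G v - x \<bullet> v\<bar> \<le> worst_err S G"
  unfolding worst_err_def by (rule SUP_upper2[OF assms(1)], rule SUP_upper[OF assms(2)])

lemma worst_err_ge_half_dist:
  fixes S :: "'a::euclidean_space set"
  assumes "x \<in> S" "y \<in> S"
  shows "ereal (dist x y / 2) \<le> worst_err S G"
proof (cases "x = y")
  case True
  obtain v :: 'a where "v \<in> Basis" using nonempty_Basis by blast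
  then have "v \<in> sphere 0 1" by simp
  then have "ereal 0 \<le> worst_err S G"
    using error_le_worst_err[OF assms(1)] by (meson abs_ge_zero ereal_less_eq(3) order_trans)
  with True show ?thesis by simp
next
  case False
  define v where "v = (x - y) /\<^sub>R norm (x - y)"
  have v: "v \<in> sphere 0 1" using False by (simp add: v_def)
  have "(x - y) \<bullet> v = dist x y"
    using False by (simp add: v_def dist_norm dot_square_norm power2_eq_square)
  then have "dist x y \<le> \<bar>G v - x \<bullet> v\<bar> + \<bar>G v - y \<bullet> v\<bar>"
    by (simp add: inner_diff_left)
  then have "dist x y / 2 \<le> \<bar>G v - x \<bullet> v\<bar> \<or> dist x y / 2 \<le> \<bar>G v - y \<bullet> v\<bar>"
    by linarith
  then show ?thesis
    using error_le_worst_err[OF assms(1) v, of G] error_le_worst_err[OF assms(2) v, of G]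
    by (meson ereal_less_eq(3) order_trans)
qed

lemma worst_err_ge_half_ediam:
  fixes S :: "'a::euclidean_space set"
  shows "ediam S / 2 \<le> worst_err S G"
proof -
  have "ediam S \<le> 2 * worst_err S G"
    unfolding ediam_def
  proof (intro SUP_least)
    fix x y assume "x \<in> S" "y \<in> S"
    then have "2 * ereal (dist x y / 2) \<le> 2 * worst_err S G"
      by (intro ereal_mult_left_mono worst_err_ge_half_dist) auto
    then show "ereal (dist x y) \<le> 2 * worst_err S G" by simp
  qed
  then show ?thesis by (subst ereal_divide_le_pos) auto
qed

lemma mid_rule_error_le_half_diameter:
  fixes S :: "'a::euclidean_space set"
  assumes "compact S" "x \<in> S" "norm v = 1"
  shows "\<bar>mid_rule S v - x \<bullet> v\<bar> \<le> diameter S / 2"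
proof -
  have cont: "continuous_on S (\<lambda>x. x \<bullet> v)" by (intro continuous_intros)
  obtain a where a: "a \<in> S" "\<And>y. y \<in> S \<Longrightarrow> y \<bullet> v \<le> a \<bullet> v"
    using continuous_attains_sup[OF assms(1) _ cont] assms(2) by blast
  obtain b where b: "b \<in> S" "\<And>y. y \<in> S \<Longrightarrow> b \<bullet> v \<le> y \<bullet> v"
    using continuous_attains_inf[OF assms(1) _ cont] assms(2) by blast
  have "Sup ((\<lambda>x. x \<bullet> v) ` S) = a \<bullet> v" by (rule cSup_eq_maximum) (use a in auto)
  moreover have "Inf ((\<lambda>x. x \<bullet> v) ` S) = b \<bullet> v" by (rule cInf_eq_minimum) (use b in auto)
  ultimately have mid: "mid_rule S v = (a \<bullet> v + b \<bullet> v) / 2"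
    by (simp add: mid_rule_def)
  have "a \<bullet> v - b \<bullet> v \<le> norm (a - b) * norm v"
    using Cauchy_Schwarz_ineq2[of "a - b" v] by (simp add: inner_diff_left)
  also have "\<dots> \<le> diameter S"
    using diameter_bounded_bound[OF compact_imp_bounded[OF assms(1)] a(1) b(1)] assms(3)
    by (simp add: dist_norm)
  finally show ?thesis
    using a(2)[OF assms(2)] b(2)[OF assms(2)] unfolding mid by (auto simp: abs_le_iff field_simps)
qed

lemma worst_err_mid_rule_le:
  fixes S :: "'a::euclidean_space set"
  assumes "compact S"
  shows "worst_err S (mid_rule S) \<le> ereal (diameter S / 2)"
  unfolding worst_err_def
  using mid_rule_error_le_half_diameter[OF assms] by (intro SUP_least) simp

lemma worst_err_mid_rule:
  fixes S :: "'a::euclidean_space set"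
  assumes "closed S"
  shows "worst_err S (mid_rule S) = ediam S / 2"
proof (rule antisym[OF _ worst_err_ge_half_ediam])
  consider "S = {}" | "\<not> bounded S" | "compact S" "S \<noteq> {}"
    using assms compact_eq_bounded_closed by blast
  then show "worst_err S (mid_rule S) \<le> ediam S / 2"
  proof cases
    case 1
    then show ?thesis by (simp add: worst_err_def)
  next
    case 2
    then show ?thesis by (simp add: ediam_unbounded)
  next
    case 3
    then show ?thesis using worst_err_mid_rule_le ediam_eq_diameter by fastforce
  qed
qed

lemma SUP_SUP_member_swap:
  fixes f :: "'x \<Rightarrow> 'r \<Rightarrow> 'c::complete_lattice"
  shows "(SUP x. SUP r\<in>{r. P r \<and> x \<in> A r}. f x r) = (SUP r\<in>{r. P r \<and> A r \<noteq> {}}. SUP x\<in>A r. f x r)"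
  by (rule antisym; auto intro!: SUP_least intro: SUP_upper2)

lemma OPT_improper_eq_INF_SUP_half_ediam:
  "OPT_improper TYPE('a::euclidean_space) T \<delta> =
     (INF R\<in>{R::(real list \<Rightarrow> 'a) \<times> (real list \<Rightarrow> 'a \<Rightarrow> real). valid_recon R}.
        SUP rs\<in>{rs. length rs = T \<and> Phi T \<delta> (queries (fst R) rs) (answers rs) \<noteq> {}}.
          ediam (Phi T \<delta> (queries (fst R) rs) (answers rs)) / 2)"
proof -
  define region where "region q rs = Phi T \<delta> (queries q rs) (answers rs)"
    for q :: "real list \<Rightarrow> 'a" and rs
  define feasible where "feasible q = {rs. length rs = T \<and> region q rs \<noteq> {}}" for q
  define guarantee where
    "guarantee R = (SUP rs\<in>feasible (fst R). worst_err (region (fst R) rs) (snd R rs))"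
    for R :: "(real list \<Rightarrow> 'a) \<times> (real list \<Rightarrow> 'a \<Rightarrow> real)"
  define mid_recon where "mid_recon R = (fst R, \<lambda>rs. mid_rule (region (fst R) rs))"
    for R :: "(real list \<Rightarrow> 'a) \<times> (real list \<Rightarrow> 'a \<Rightarrow> real)"
  have OPT_eq: "OPT_improper TYPE('a) T \<delta> = (INF R\<in>{R. valid_recon R}. guarantee R)"
    unfolding OPT_improper_def guarantee_def feasible_def region_def worst_err_def
    by (simp only: SUP_SUP_member_swap)
  have guarantee_ge: "(SUP rs\<in>feasible (fst R). ediam (region (fst R) rs) / 2) \<le> guarantee R" for R
    unfolding guarantee_def by (intro SUP_mono' worst_err_ge_half_ediam)
  have guarantee_mid_recon:
    "guarantee (mid_recon R) = (SUP rs\<in>feasible (fst R). ediam (region (fst R) rs) / 2)" for R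
    unfolding guarantee_def mid_recon_def
    by (simp add: region_def closed_Phi worst_err_mid_rule)
  have valid_mid_recon: "valid_recon (mid_recon R) \<longleftrightarrow> valid_recon R" for R
    by (simp add: valid_recon_def mid_recon_def)
  have "(INF R\<in>{R. valid_recon R}. guarantee R)
      = (INF R\<in>{R. valid_recon R}. SUP rs\<in>feasible (fst R). ediam (region (fst R) rs) / 2)"
  proof (rule antisym)
    show "(INF R\<in>{R. valid_recon R}. guarantee R)
        \<le> (INF R\<in>{R. valid_recon R}. SUP rs\<in>feasible (fst R). ediam (region (fst R) rs) / 2)"
      by (rule INF_mono) (metis guarantee_mid_recon valid_mid_recon mem_Collect_eq order_refl)
  qed (intro INF_mono' guarantee_ge)
  then show ?thesis
    unfolding OPT_eq feasible_def region_def .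
qed

theorem mainTheorem18:
  fixes T :: nat and \<delta> :: real
  assumes "\<delta> > 0"
  shows
    "(\<forall>(vs :: nat \<Rightarrow> 'a::euclidean_space) (rs :: nat \<Rightarrow> real).
        (\<forall>t<T. vs t \<in> sphere 0 1) \<and> Phi T \<delta> vs rs \<noteq> {} \<and> bounded (Phi T \<delta> vs rs) \<longrightarrow>
          (\<forall>G :: 'a \<Rightarrow> real. worst_err (Phi T \<delta> vs rs) G \<ge> ereal (diameter (Phi T \<delta> vs rs) / 2))
          \<and> worst_err (Phi T \<delta> vs rs) (mid_rule (Phi T \<delta> vs rs)) = ereal (diameter (Phi T \<delta> vs rs) / 2))
     \<and> OPT_improper TYPE('a) T \<delta> =
       (INF R\<in>{R::(real list \<Rightarrow> 'a) \<times> (real list \<Rightarrow> 'a \<Rightarrow> real). valid_recon R}.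
          SUP rs\<in>{rs. length rs = T \<and> Phi T \<delta> (queries (fst R) rs) (answers rs) \<noteq> {}}.
            ediam (Phi T \<delta> (queries (fst R) rs) (answers rs)) / 2)"
proof (intro conjI allI impI OPT_improper_eq_INF_SUP_half_ediam)
  fix vs :: "nat \<Rightarrow> 'a" and rs :: "nat \<Rightarrow> real"
  assume "(\<forall>t<T. vs t \<in> sphere 0 1) \<and> Phi T \<delta> vs rs \<noteq> {} \<and> bounded (Phi T \<delta> vs rs)"
  then have "compact (Phi T \<delta> vs rs)" and "Phi T \<delta> vs rs \<noteq> {}"
    using closed_Phi compact_eq_bounded_closed by blast+
  then have half_ediam: "ediam (Phi T \<delta> vs rs) / 2 = ereal (diameter (Phi T \<delta> vs rs) / 2)"
    by (simp add: ediam_eq_diameter)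
  show "worst_err (Phi T \<delta> vs rs) G \<ge> ereal (diameter (Phi T \<delta> vs rs) / 2)" for G
    using worst_err_ge_half_ediam by (metis half_ediam)
  show "worst_err (Phi T \<delta> vs rs) (mid_rule (Phi T \<delta> vs rs)) = ereal (diameter (Phi T \<delta> vs rs) / 2)"
    using worst_err_mid_rule[OF closed_Phi] by (metis half_ediam)
qed

end
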